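(* Let $G_{20}$ be the graph with vertex set $\mathbb{Z}_{18}\cup\{x,y_0,y_1\}$ in which the vertices of $\mathbb{Z}_{18}$ form a clique, $x$ is adjacent to every element of $\mathbb{Z}_{18}$, $y_0$ is adjacent to exactly the even elements of $\mathbb{Z}_{18}$, $y_1$ to exactly the odd elements, and there are no edges among $x,y_0,y_1$. Consider the cyclic sequences $$L_0=(2, 7, 12, 16, 4, 6, 13, 10, y, 8, 9, 17, x, 1, 5, 3, 14, 11, 15),$$ $$L_1=(11, 13, 6, 2, 14, 12, 7, 9, 16, 10, y, 8, 3, 4, 17, x, 1, 15, 5),$$ $$L_2=(5, 16, 13, 14, 17, x, 1, 10, y, 8, 6, 15, 4, 7, 3, 9, 12, 2, 11).$$ For $\gamma\in\mathbb{Z}_{18}$, let the rotation at $\gamma$ be obtained from $L_{\gamma\bmod 3}$ by adding $\gamma$ (mod 18) to each numerical entry, leaving $x$ unchanged and replacing $y$ by $y_{\gamma \bmod 2}$. Then there exist rotations at $x$, $y_0$, $y_1$ such that the resulting rotation system is a triangular embedding of $G_{20}$ in the orientable surface $S_{22}$ of genus $22$.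
   Context: A rotation system on a simple graph assigns to each vertex a cyclic ordering of its neighbors and determines a cellular orientable embedding. An embedding is triangular if every face is a triangle. $S_k$ denotes the orientable surface of genus $k$. *)

theory Defs
  imports Main
begin

text \<open>A rotation system assigns to each vertex a list, read cyclically,
that enumerates each neighbour exactly once.\<close>

definition is_rotation_system ::
  "'v set \<Rightarrow> ('v \<Rightarrow> 'v \<Rightarrow> bool) \<Rightarrow> ('v \<Rightarrow> 'v list) \<Rightarrow> bool" where
  "is_rotation_system V adj rho \<longleftrightarrow>
     (\<forall>v\<in>V. distinct (rho v) \<and> set (rho v) = {u\<in>V. adj v u})"

definition cyc_succ :: "'v list \<Rightarrow> 'v \<Rightarrow> 'v" where
  "cyc_succ xs a = the (map_of (zip xs (rotate1 xs)) a)"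

definition darts :: "'v set \<Rightarrow> ('v \<Rightarrow> 'v \<Rightarrow> bool) \<Rightarrow> ('v \<times> 'v) set" where
  "darts V adj = {(u,v). u \<in> V \<and> v \<in> V \<and> adj u v}"

definition face_step :: "('v \<Rightarrow> 'v list) \<Rightarrow> 'v \<times> 'v \<Rightarrow> 'v \<times> 'v" where
  "face_step rho d = (snd d, cyc_succ (rho (snd d)) (fst d))"

definition face_of :: "('v \<Rightarrow> 'v list) \<Rightarrow> 'v \<times> 'v \<Rightarrow> ('v \<times> 'v) set" where
  "face_of rho d = {(face_step rho ^^ n) d | n. True}"

definition faces :: "'v set \<Rightarrow> ('v \<Rightarrow> 'v \<Rightarrow> bool) \<Rightarrow> ('v \<Rightarrow> 'v list) \<Rightarrow> ('v \<times> 'v) set set" where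
  "faces V adj rho = face_of rho ` darts V adj"

definition triangular :: "'v set \<Rightarrow> ('v \<Rightarrow> 'v \<Rightarrow> bool) \<Rightarrow> ('v \<Rightarrow> 'v list) \<Rightarrow> bool" where
  "triangular V adj rho \<longleftrightarrow> (\<forall>F\<in>faces V adj rho. card F = 3)"

definition num_edges :: "'v set \<Rightarrow> ('v \<Rightarrow> 'v \<Rightarrow> bool) \<Rightarrow> nat" where
  "num_edges V adj = card (darts V adj) div 2"

text \<open>Genus of the orientable surface of the cellular embedding given by the rotation
system, via Euler's formula  V - E + F = 2 - 2g  (the graph is connected).\<close>
definition embedding_genus :: "'v set \<Rightarrow> ('v \<Rightarrow> 'v \<Rightarrow> bool) \<Rightarrow> ('v \<Rightarrow> 'v list) \<Rightarrow> int" where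
  "embedding_genus V adj rho =
     (2 - int (card V) + int (num_edges V adj) - int (card (faces V adj rho))) div 2"

datatype vtx = Z nat | X | Y nat  \<comment> \<open>Z k for k in Z_18, X = x, Y 0 = y_0, Y 1 = y_1\<close>

definition G20_V :: "vtx set" where
  "G20_V = Z ` {0..<18} \<union> {X, Y 0, Y 1}"

fun G20_adj :: "vtx \<Rightarrow> vtx \<Rightarrow> bool" where
  "G20_adj (Z a) (Z b) = (a \<noteq> b)"
| "G20_adj (Z a) X = True"
| "G20_adj X (Z a) = True"
| "G20_adj (Z a) (Y i) = (a mod 2 = i)"
| "G20_adj (Y i) (Z a) = (a mod 2 = i)"
| "G20_adj _ _ = False"

datatype entry = N nat | Ex_x | Ey_y

definition L0 :: "entry list" where
  "L0 = [N 2, N 7, N 12, N 16, N 4, N 6, N 13, N 10, Ey_y, N 8, N 9, N 17, Ex_x, N 1, N 5, N 3, N 14, N 11, N 15]"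
definition L1 :: "entry list" where
  "L1 = [N 11, N 13, N 6, N 2, N 14, N 12, N 7, N 9, N 16, N 10, Ey_y, N 8, N 3, N 4, N 17, Ex_x, N 1, N 15, N 5]"
definition L2 :: "entry list" where
  "L2 = [N 5, N 16, N 13, N 14, N 17, Ex_x, N 1, N 10, Ey_y, N 8, N 6, N 15, N 4, N 7, N 3, N 9, N 12, N 2, N 11]"

fun shift_entry :: "nat \<Rightarrow> entry \<Rightarrow> vtx" where
  "shift_entry g (N k) = Z ((k + g) mod 18)"
| "shift_entry g Ex_x = X"
| "shift_entry g Ey_y = Y (g mod 2)"

definition base_list :: "nat \<Rightarrow> entry list" where
  "base_list g = (if g mod 3 = 0 then L0 else if g mod 3 = 1 then L1 else L2)"

definition rot_Z :: "nat \<Rightarrow> vtx list" where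
  "rot_Z g = map (shift_entry g) (base_list g)"

fun G20_rot :: "vtx list \<Rightarrow> vtx list \<Rightarrow> vtx list \<Rightarrow> vtx \<Rightarrow> vtx list" where
  "G20_rot rx ry0 ry1 (Z g) = rot_Z g"
| "G20_rot rx ry0 ry1 X = rx"
| "G20_rot rx ry0 ry1 (Y i) = (if i = 0 then ry0 else ry1)"

end

theory Submission
  imports Defs
begin

text \<open>Face tracing is a permutation of the darts. If every orbit of it has exactly three
darts, every face is a triangle and there are exactly |darts|/3 faces. For the rotation system
of G20, completed by the rotations below at x, y_0, y_1, this is a finite check over its 378
darts; Euler's formula with V = 21, E = 189, F = 126 then gives genus (2 - 21 + 189 - 126)/2 = 22.\<close>

lemma cyc_succ_in_set:
  assumes "a \<in> set xs"
  shows "cyc_succ xs a \<in> set xs"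
proof -
  obtain b where b: "map_of (zip xs (rotate1 xs)) a = Some b"
    using assms map_of_zip_is_Some[of xs "rotate1 xs" a] by auto
  then have "(a, b) \<in> set (zip xs (rotate1 xs))"
    by (rule map_of_SomeD)
  then have "b \<in> set xs"
    using set_zip_rightD by fastforce
  with b show ?thesis
    by (simp add: cyc_succ_def)
qed

lemma face_step_in_darts:
  assumes rot: "is_rotation_system V adj rho"
    and sym: "\<And>u v. adj u v \<Longrightarrow> adj v u"
    and d: "d \<in> darts V adj"
  shows "face_step rho d \<in> darts V adj"
proof -
  obtain u v where uv: "d = (u, v)" "u \<in> V" "v \<in> V" "adj u v"
    using d by (auto simp: darts_def)
  have "u \<in> set (rho v)"
    using rot uv sym by (auto simp: is_rotation_system_def)
  then have "cyc_succ (rho v) u \<in> set (rho v)"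
    by (rule cyc_succ_in_set)
  then show ?thesis
    using rot uv by (auto simp: is_rotation_system_def darts_def face_step_def)
qed

lemma face_of_eq_if_period_3:
  assumes "(face_step rho ^^ 3) d = d"
  shows "face_of rho d = {d, face_step rho d, face_step rho (face_step rho d)}"
proof -
  let ?f = "face_step rho"
  let ?T = "{d, ?f d, ?f (?f d)}"
  have "?f (?f (?f d)) = d"
    using assms by (simp add: numeral_3_eq_3)
  then have "(?f ^^ n) d \<in> ?T" for n
    by (induction n) auto
  moreover have "d = (?f ^^ 0) d" "?f d = (?f ^^ 1) d" "?f (?f d) = (?f ^^ 2) d"
    by (simp_all add: numeral_2_eq_2)
  ultimately show ?thesis
    unfolding face_of_def by blast
qed

lemma card_eq_3_mult_card_orbits:
  fixes f :: "'a \<Rightarrow> 'a"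
  defines "orb \<equiv> \<lambda>d. {d, f d, f (f d)}"
  assumes "finite D"
    and closed: "\<And>d. d \<in> D \<Longrightarrow> f d \<in> D"
    and period: "\<And>d. d \<in> D \<Longrightarrow> f (f (f d)) = d"
    and three: "\<And>d. d \<in> D \<Longrightarrow> card (orb d) = 3"
  shows "card D = 3 * card (orb ` D)"
proof -
  have orb_eq: "orb x = orb d" if "d \<in> D" "x \<in> orb d" for x d
    using that period[of d] arg_cong[OF period[of d], of f] unfolding orb_def by auto
  have cover: "\<Union> (orb ` D) = D"
    using closed unfolding orb_def by blast
  have "pairwise disjnt (orb ` D)"
    unfolding pairwise_def disjnt_def using orb_eq by blast
  then have "card (\<Union> (orb ` D)) = sum card (orb ` D)"
    by (rule card_Union_disjoint) (auto simp: orb_def)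
  also have "\<dots> = (\<Sum>_\<in>orb ` D. 3)"
    using three by (intro sum.cong) auto
  also have "\<dots> = 3 * card (orb ` D)"
    by simp
  finally show ?thesis
    using cover by simp
qed

lemma triangular_if_face_step_period_3:
  fixes rho :: "'v \<Rightarrow> 'v list"
  assumes rot: "is_rotation_system V adj rho"
    and sym: "\<And>u v. adj u v \<Longrightarrow> adj v u"
    and "finite V"
    and orbits: "\<forall>d\<in>darts V adj. let f = face_step rho in
                   f (f (f d)) = d \<and> distinct [d, f d, f (f d)]"
  shows "triangular V adj rho"
    and "card (darts V adj) = 3 * card (faces V adj rho)"
proof -
  let ?f = "face_step rho"
  let ?orb = "\<lambda>d. {d, ?f d, ?f (?f d)}"
  have period: "?f (?f (?f d)) = d" and three: "card (?orb d) = 3"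
    if "d \<in> darts V adj" for d
    using orbits that by (auto simp: Let_def card_insert_if)
  have faces_eq: "faces V adj rho = ?orb ` darts V adj"
    unfolding faces_def
    using period by (intro image_cong refl face_of_eq_if_period_3) (simp add: numeral_3_eq_3)
  show "triangular V adj rho"
    unfolding triangular_def faces_eq using three by auto
  have "finite (darts V adj)"
    using \<open>finite V\<close> finite_subset[of "darts V adj" "V \<times> V"] by (auto simp: darts_def)
  then show "card (darts V adj) = 3 * card (faces V adj rho)"
    unfolding faces_eq
    using face_step_in_darts[OF rot sym] period three by (rule card_eq_3_mult_card_orbits)
qed

definition rot_x :: "vtx list" where
  "rot_x = map Z [0, 17, 16, 15, 14, 13, 12, 11, 10, 9, 8, 7, 6, 5, 4, 3, 2, 1]"

definition rot_y0 :: "vtx list" where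
  "rot_y0 = map Z [0, 10, 2, 12, 4, 14, 6, 16, 8]"

definition rot_y1 :: "vtx list" where
  "rot_y1 = map Z [1, 11, 3, 13, 5, 15, 7, 17, 9]"

definition G20_vertices :: "vtx list" where
  "G20_vertices = map Z [0, 1, 2, 3, 4, 5, 6, 7, 8, 9, 10, 11, 12, 13, 14, 15, 16, 17] @ [X, Y 0, Y 1]"

lemma G20_V_eq: "G20_V = set G20_vertices"
  unfolding G20_V_def G20_vertices_def by code_simp

lemma distinct_G20_vertices: "distinct G20_vertices"
  by (simp add: G20_vertices_def)

lemma card_G20_V: "card G20_V = 21"
  using distinct_G20_vertices by (simp add: G20_V_eq distinct_card G20_vertices_def)

lemma G20_darts_eq:
  "darts G20_V G20_adj = set (filter (case_prod G20_adj) (List.product G20_vertices G20_vertices))"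
  unfolding darts_def G20_V_eq by auto

lemma card_G20_darts: "card (darts G20_V G20_adj) = 378"
proof -
  have "distinct (filter (case_prod G20_adj) (List.product G20_vertices G20_vertices))"
    using distinct_G20_vertices by (intro distinct_filter distinct_product)
  moreover have "length (filter (case_prod G20_adj) (List.product G20_vertices G20_vertices)) = 378"
    by (simp add: G20_vertices_def)
  ultimately show ?thesis
    unfolding G20_darts_eq by (simp only: distinct_card)
qed

lemma G20_adj_sym: "G20_adj u v \<Longrightarrow> G20_adj v u"
  by (cases u; cases v) auto

lemma rot_Z_values:
  "rot_Z 0 = [Z 2, Z 7, Z 12, Z 16, Z 4, Z 6, Z 13, Z 10, Y 0, Z 8, Z 9, Z 17, X, Z 1, Z 5, Z 3, Z 14, Z 11, Z 15]"
  "rot_Z 1 = [Z 12, Z 14, Z 7, Z 3, Z 15, Z 13, Z 8, Z 10, Z 17, Z 11, Y 1, Z 9, Z 4, Z 5, Z 0, X, Z 2, Z 16, Z 6]"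
  "rot_Z 2 = [Z 7, Z 0, Z 15, Z 16, Z 1, X, Z 3, Z 12, Y 0, Z 10, Z 8, Z 17, Z 6, Z 9, Z 5, Z 11, Z 14, Z 4, Z 13]"
  "rot_Z 3 = [Z 5, Z 10, Z 15, Z 1, Z 7, Z 9, Z 16, Z 13, Y 1, Z 11, Z 12, Z 2, X, Z 4, Z 8, Z 6, Z 17, Z 14, Z 0]"
  "rot_Z 4 = [Z 15, Z 17, Z 10, Z 6, Z 0, Z 16, Z 11, Z 13, Z 2, Z 14, Y 0, Z 12, Z 7, Z 8, Z 3, X, Z 5, Z 1, Z 9]"
  "rot_Z 5 = [Z 10, Z 3, Z 0, Z 1, Z 4, X, Z 6, Z 15, Y 1, Z 13, Z 11, Z 2, Z 9, Z 12, Z 8, Z 14, Z 17, Z 7, Z 16]"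
  "rot_Z 6 = [Z 8, Z 13, Z 0, Z 4, Z 10, Z 12, Z 1, Z 16, Y 0, Z 14, Z 15, Z 5, X, Z 7, Z 11, Z 9, Z 2, Z 17, Z 3]"
  "rot_Z 7 = [Z 0, Z 2, Z 13, Z 9, Z 3, Z 1, Z 14, Z 16, Z 5, Z 17, Y 1, Z 15, Z 10, Z 11, Z 6, X, Z 8, Z 4, Z 12]"
  "rot_Z 8 = [Z 13, Z 6, Z 3, Z 4, Z 7, X, Z 9, Z 0, Y 0, Z 16, Z 14, Z 5, Z 12, Z 15, Z 11, Z 17, Z 2, Z 10, Z 1]"
  "rot_Z 9 = [Z 11, Z 16, Z 3, Z 7, Z 13, Z 15, Z 4, Z 1, Y 1, Z 17, Z 0, Z 8, X, Z 10, Z 14, Z 12, Z 5, Z 2, Z 6]"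
  "rot_Z 10 = [Z 3, Z 5, Z 16, Z 12, Z 6, Z 4, Z 17, Z 1, Z 8, Z 2, Y 0, Z 0, Z 13, Z 14, Z 9, X, Z 11, Z 7, Z 15]"
  "rot_Z 11 = [Z 16, Z 9, Z 6, Z 7, Z 10, X, Z 12, Z 3, Y 1, Z 1, Z 17, Z 8, Z 15, Z 0, Z 14, Z 2, Z 5, Z 13, Z 4]"
  "rot_Z 12 = [Z 14, Z 1, Z 6, Z 10, Z 16, Z 0, Z 7, Z 4, Y 0, Z 2, Z 3, Z 11, X, Z 13, Z 17, Z 15, Z 8, Z 5, Z 9]"
  "rot_Z 13 = [Z 6, Z 8, Z 1, Z 15, Z 9, Z 7, Z 2, Z 4, Z 11, Z 5, Y 1, Z 3, Z 16, Z 17, Z 12, X, Z 14, Z 10, Z 0]"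
  "rot_Z 14 = [Z 1, Z 12, Z 9, Z 10, Z 13, X, Z 15, Z 6, Y 0, Z 4, Z 2, Z 11, Z 0, Z 3, Z 17, Z 5, Z 8, Z 16, Z 7]"
  "rot_Z 15 = [Z 17, Z 4, Z 9, Z 13, Z 1, Z 3, Z 10, Z 7, Y 1, Z 5, Z 6, Z 14, X, Z 16, Z 2, Z 0, Z 11, Z 8, Z 12]"
  "rot_Z 16 = [Z 9, Z 11, Z 4, Z 0, Z 12, Z 10, Z 5, Z 7, Z 14, Z 8, Y 0, Z 6, Z 1, Z 2, Z 15, X, Z 17, Z 13, Z 3]"
  "rot_Z 17 = [Z 4, Z 15, Z 12, Z 13, Z 16, X, Z 0, Z 9, Y 1, Z 7, Z 5, Z 14, Z 3, Z 6, Z 2, Z 8, Z 11, Z 1, Z 10]"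
  by (simp_all add: rot_Z_def base_list_def L0_def L1_def L2_def)

text \<open>Simp normalises \<open>1 :: nat\<close> to \<open>Suc 0\<close>, so rewrite rules about concrete
rotations must do so too.\<close>

lemmas G20_rotations =
  rot_Z_values[unfolded One_nat_def]
  rot_x_def[unfolded list.map One_nat_def]
  rot_y0_def[unfolded list.map]
  rot_y1_def[unfolded list.map One_nat_def]

lemma G20_rotation_system: "is_rotation_system G20_V G20_adj (G20_rot rot_x rot_y0 rot_y1)"
  unfolding is_rotation_system_def G20_V_eq
  by (simp add: G20_vertices_def G20_rotations; safe; simp)

lemma cyc_succ_eq_map_of:
  "xs = x # ys \<Longrightarrow> cyc_succ xs = (\<lambda>a. the (map_of (zip (x # ys) (ys @ [x])) a))"
  by (simp add: cyc_succ_def fun_eq_iff)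

text \<open>Successor tables of all rotations, computed once so that face tracing below only
performs look-ups.\<close>

lemmas G20_succ_tables =
  G20_rotations[THEN cyc_succ_eq_map_of, unfolded append_Cons append_Nil zip_Cons_Cons zip_Nil]

lemma G20_face_step_period_3:
  "\<forall>d\<in>darts G20_V G20_adj. let f = face_step (G20_rot rot_x rot_y0 rot_y1) in
     f (f (f d)) = d \<and> distinct [d, f d, f (f d)]"
  unfolding G20_darts_eq
  by (simp add: G20_vertices_def face_step_def G20_succ_tables Let_def)

theorem mainTheorem3:
  shows "\<exists>rx ry0 ry1.
     is_rotation_system G20_V G20_adj (G20_rot rx ry0 ry1) \<and>
     triangular G20_V G20_adj (G20_rot rx ry0 ry1) \<and>
     embedding_genus G20_V G20_adj (G20_rot rx ry0 ry1) = 22"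
proof (intro exI conjI)
  let ?rho = "G20_rot rot_x rot_y0 rot_y1"
  have "finite G20_V"
    by (simp add: G20_V_eq)
  note triangulation =
    triangular_if_face_step_period_3[OF G20_rotation_system G20_adj_sym this G20_face_step_period_3]
  show "is_rotation_system G20_V G20_adj ?rho"
    by (rule G20_rotation_system)
  show "triangular G20_V G20_adj ?rho"
    by (rule triangulation(1))
  have "card (faces G20_V G20_adj ?rho) = 126"
    using triangulation(2) by (simp add: card_G20_darts)
  then show "embedding_genus G20_V G20_adj ?rho = 22"
    by (simp add: embedding_genus_def num_edges_def card_G20_V card_G20_darts)
qed

end
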